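(* Let $n,p,n_\xi\ge 1$ be integers, let $f_1,\dots,f_n:\mathbb{R}^p\to\mathbb{R}$ be continuously differentiable, and let $g=\frac1n\sum_{i=1}^n f_i$. Suppose there exists a unique $x^*\in\mathbb{R}^p$ with $\nabla g(x^* )=0$. Let $\tilde A_i\in\mathbb{R}^{n_\xi\times n_\xi}$, $\tilde B_i\in\mathbb{R}^{n_\xi\times n}$ ($i=1,\dots,n$) and $\tilde C\in\mathbb{R}^{1\times n_\xi}$, and set $A_i=\tilde A_i\otimes I_p$, $B_i=\tilde B_i\otimes I_p$, $C=\tilde C\otimes I_p$. Consider the jump system $$\xi^{k+1}=A_{i_k}\xi^k+B_{i_k}w^k,\qquad v^k=C\xi^k,\qquad w^k=\begin{bmatrix}\nabla f_1(v^k)\\ \vdots\\ \nabla f_n(v^k)\end{bmatrix},$$ where the indices $i_k$ are sampled IID from the uniform distribution on $\{1,\dots,n\}$. Let $w^*=\begin{bmatrix}\nabla f_1(x^* )^T&\cdots&\nabla f_n(x^* )^T\end{bmatrix}^T$ and let $\xi^*\in\mathbb{R}^{n_\xi p}$ satisfy $\xi^*=A_i\xi^*+B_iw^*$ for all $i\in\{1,\dots,n\}$ and $C\xi^*=x^*$. Assume that for some prescribed scalars $\nu,\gamma$ and $L$, for all $x\in\mathbb{R}^p$ and all $i$, $$\begin{bmatrix} x-x^*\\ \frac1n\sum_{j=1}^n\nabla f_j(x)-\frac1n\sum_{j=1}^n\nabla f_j(x^* )\end{bmatrix}^T\begin{bmatrix}2L\nu I_p&(L-\nu)I_p\\(L-\nu)I_p&-2I_p\end{bmatrix}\begin{bmatrix}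 x-x^*\\ \frac1n\sum_{j=1}^n\nabla f_j(x)-\frac1n\sum_{j=1}^n\nabla f_j(x^* )\end{bmatrix}\ge0,$$ $$\begin{bmatrix} x-x^*\\ \nabla f_i(x)-\nabla f_i(x^* )\end{bmatrix}^T\begin{bmatrix}2L\gamma I_p&(L-\gamma)I_p\\(L-\gamma)I_p&-2I_p\end{bmatrix}\begin{bmatrix} x-x^*\\ \nabla f_i(x)-\nabla f_i(x^* )\end{bmatrix}\ge0.$$ Define $\tilde D_{\psi1}=\begin{bmatrix}L&\nu&L&\gamma&\cdots&L&\gamma\end{bmatrix}^T\in\mathbb{R}^{2n+2}$ (the pair $L,\gamma$ repeated $n$ times) and $\tilde D_{\psi2}=\begin{bmatrix}-\frac1n e&\frac1n e&-e_1&e_1&\cdots&-e_n&e_n\end{bmatrix}^T\in\mathbb{R}^{(2n+2)\times n}$. If, for a given scalar $\rho$, there exist a symmetric matrix $\tilde P\in\mathbb{R}^{n_\xi\times n_\xi}$ with $\tilde P>0$ and nonnegative scalars $\lambda_1,\lambda_2$ such that $$\begin{bmatrix}\frac1n\sum_{i=1}^n\tilde A_i^T\tilde P\tilde A_i-\rho^2\tilde P&\frac1n\sum_{i=1}^n\tilde A_i^T\tilde P\tilde B_i\\ \frac1n\sum_{i=1}^n\tilde B_i^T\tilde P\tilde A_i&\frac1n\sum_{i=1}^n\tilde B_i^T\tilde P\tilde B_i\end{bmatrix}+\begin{bmatrix}\tilde C^T\tilde D_{\psi1}^T\\ \tilde D_{\psi2}^T\end{bmatrix}\left(\begin{bmatrix}\lambda_1&\tilde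 0^T\\ \tilde 0&\frac{\lambda_2}{n}I_n\end{bmatrix}\otimes\begin{bmatrix}0&1\\1&0\end{bmatrix}\right)\begin{bmatrix}\tilde D_{\psi1}\tilde C&\tilde D_{\psi2}\end{bmatrix}\le0,$$ then for all $k\ge1$ and all $\xi^0\in\mathbb{R}^{n_\xi p}$, $$\mathbb{E}\left[(\xi^{k+1}-\xi^* )^T(\tilde P\otimes I_p)(\xi^{k+1}-\xi^* )\right]\le\rho^2\,\mathbb{E}\left[(\xi^{k}-\xi^* )^T(\tilde P\otimes I_p)(\xi^{k}-\xi^* )\right],$$ and consequently $\mathbb{E}\|\xi^k-\xi^*\|^2\le\rho^{2k}\,\mathrm{cond}(\tilde P)\,\|\xi^0-\xi^*\|^2$ for all $k\ge1$.
   Context: $e_i$ is the $i$-th standard basis vector of $\mathbb{R}^n$, $e\in\mathbb{R}^n$ is the all-ones vector, $\tilde 0\in\mathbb{R}^n$ is the zero vector, $\otimes$ is the Kronecker product, and $M\le0$ means negative semidefinite. $\mathrm{cond}(\tilde P)$ is the condition number (ratio of largest to smallest eigenvalue) of the positive definite matrix $\tilde P$. Expectation is over the random indices $i_k$. *)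

theory Defs
  imports "HOL-Analysis.Analysis" "HOL-Probability.Probability"
begin

text \<open>Small (scalar) matrices are represented as functions nat => nat => real;
  their dimensions are passed explicitly, entries outside the range are irrelevant.
  Indices are 0-based: the paper's i in {1..n} is our i in {0..<n}.\<close>

type_synonym rmat = "nat \<Rightarrow> nat \<Rightarrow> real"

definition mmul :: "nat \<Rightarrow> rmat \<Rightarrow> rmat \<Rightarrow> rmat" where
  "mmul m A B = (\<lambda>i j. \<Sum>k<m. A i k * B k j)"

definition tr :: "rmat \<Rightarrow> rmat" where
  "tr A = (\<lambda>i j. A j i)"

definition block4 :: "nat \<Rightarrow> nat \<Rightarrow> rmat \<Rightarrow> rmat \<Rightarrow> rmat \<Rightarrow> rmat \<Rightarrow> rmat" where
  "block4 r c A B C D = (\<lambda>i j. if i < r then (if j < c then A i j else B i (j - c))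
                                        else (if j < c then C (i - r) j else D (i - r) (j - c)))"

definition hcat :: "nat \<Rightarrow> rmat \<Rightarrow> rmat \<Rightarrow> rmat" where
  "hcat c A B = (\<lambda>i j. if j < c then A i j else B i (j - c))"

definition kron :: "nat \<Rightarrow> nat \<Rightarrow> rmat \<Rightarrow> rmat \<Rightarrow> rmat" where
  "kron rb cb A B = (\<lambda>i j. A (i div rb) (j div cb) * B (i mod rb) (j mod cb))"

definition idm :: "nat \<Rightarrow> rmat" where
  "idm d = (\<lambda>i j. if i = j \<and> i < d then 1 else 0)"

definition zerom :: rmat where "zerom = (\<lambda>i j. 0)"

definition quad :: "nat \<Rightarrow> rmat \<Rightarrow> (nat \<Rightarrow> real) \<Rightarrow> real" where
  "quad d M v = (\<Sum>i<d. \<Sum>j<d. v i * M i j * v j)"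

definition nsd :: "nat \<Rightarrow> rmat \<Rightarrow> bool" where
  "nsd d M \<longleftrightarrow> (\<forall>v. quad d M v \<le> 0)"

definition pdef :: "nat \<Rightarrow> rmat \<Rightarrow> bool" where
  "pdef d M \<longleftrightarrow> (\<forall>v. (\<exists>i<d. v i \<noteq> 0) \<longrightarrow> quad d M v > 0)"

definition symm :: "nat \<Rightarrow> rmat \<Rightarrow> bool" where
  "symm d M \<longleftrightarrow> (\<forall>i<d. \<forall>j<d. M i j = M j i)"

definition eigval :: "nat \<Rightarrow> rmat \<Rightarrow> real \<Rightarrow> bool" where
  "eigval d M l \<longleftrightarrow> (\<exists>v. (\<exists>i<d. v i \<noteq> 0) \<and> (\<forall>i<d. (\<Sum>j<d. M i j * v j) = l * v i))"

definition cond :: "nat \<Rightarrow> rmat \<Rightarrow> real" where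
  "cond d M = Max {l. eigval d M l} / Min {l. eigval d M l}"

text \<open>Vectors in R^(n_xi p) are block vectors xi :: nat => real^'p (blocks 0..<n_xi).
  (A (x) I_p) xi has block a equal to sum_b A a b *R xi b.\<close>

definition kmv :: "nat \<Rightarrow> rmat \<Rightarrow> (nat \<Rightarrow> 'v::real_vector) \<Rightarrow> (nat \<Rightarrow> 'v)" where
  "kmv m A x = (\<lambda>a. \<Sum>b<m. A a b *\<^sub>R x b)"

definition kquad :: "nat \<Rightarrow> rmat \<Rightarrow> (nat \<Rightarrow> 'v::real_inner) \<Rightarrow> real" where
  "kquad m P x = (\<Sum>a<m. \<Sum>b<m. P a b * (x a \<bullet> x b))"   \<comment> \<open>x^T (P (x) I_p) x\<close>

definition bnorm2 :: "nat \<Rightarrow> (nat \<Rightarrow> 'v::real_normed_vector) \<Rightarrow> real" where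
  "bnorm2 m x = (\<Sum>a<m. (norm (x a))^2)"

primrec traj :: "nat \<Rightarrow> nat \<Rightarrow> (nat \<Rightarrow> rmat) \<Rightarrow> (nat \<Rightarrow> rmat) \<Rightarrow> rmat
                  \<Rightarrow> (nat \<Rightarrow> 'v::real_vector \<Rightarrow> 'v) \<Rightarrow> (nat \<Rightarrow> 'v) \<Rightarrow> (nat \<Rightarrow> nat) \<Rightarrow> nat \<Rightarrow> (nat \<Rightarrow> 'v)" where
  "traj nxi n At Bt Ct G xi0 \<sigma> 0 = xi0"
| "traj nxi n At Bt Ct G xi0 \<sigma> (Suc k) =
     (let xi = traj nxi n At Bt Ct G xi0 \<sigma> k;
          v = kmv nxi Ct xi 0;
          w = (\<lambda>j. G j v)
      in (\<lambda>a. kmv nxi (At (\<sigma> k)) xi a + kmv n (Bt (\<sigma> k)) w a))"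

definition Eidx :: "nat \<Rightarrow> nat \<Rightarrow> ((nat \<Rightarrow> nat) \<Rightarrow> real) \<Rightarrow> real" where
  "Eidx n K h = measure_pmf.expectation (Pi_pmf {..<K} 0 (\<lambda>_. pmf_of_set {..<n})) h"

definition Dpsi1 :: "real \<Rightarrow> real \<Rightarrow> real \<Rightarrow> rmat" where   \<comment> \<open>(2n+2) x 1: [L nu L gamma ... L gamma]^T\<close>
  "Dpsi1 L \<nu> \<gamma> = (\<lambda>i j. if odd i then (if i = 1 then \<nu> else \<gamma>) else L)"

definition Dpsi2 :: "nat \<Rightarrow> rmat" where   \<comment> \<open>(2n+2) x n: rows -e/n, e/n, -e_1, e_1, ..., -e_n, e_n\<close>
  "Dpsi2 n = (\<lambda>i j. if i = 0 then - 1 / real n else if i = 1 then 1 / real n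
                    else if j = (i - 2) div 2 then (if even i then -1 else 1) else 0)"

end

theory Submission
  imports Defs "Jordan_Normal_Form.Char_Poly"
begin

text \<open>Write e = \<xi> - \<xi>*, u = v - x* and w for the gradient deviations G_j(v) - G_j(x*), and stack
  z = (e, w). Averaging over the uniformly sampled index, the expected value of
  V(\<xi>) = e^T (P \<otimes> I_p) e after one step is the quadratic form of the averaged block matrix at z.
  Testing the LMI with z, one coordinate of R^p at a time, bounds it by \<rho>^2 V(\<xi>) minus the
  multiplier's quadratic form at D_psi z. The latter is a nonnegative combination of the inner
  products (L u - d)(\<nu> u + d), with d the mean of the w_j, and (L u - w_i)(\<gamma> u + w_i); these
  are the two sector conditions written in factored form.
  Conditioning on the first k indices and iterating gives E V(\<xi>^k) \<le> \<rho>^(2k) V(\<xi>^0); the norm bound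
  follows by comparing V with the squared norm through the extreme eigenvalues of P, which are
  the extreme values of its Rayleigh quotient.\<close>

section \<open>Expectation over uniform index sequences\<close>

abbreviation index_pmf :: "nat \<Rightarrow> nat \<Rightarrow> (nat \<Rightarrow> nat) pmf" where
  "index_pmf n k \<equiv> Pi_pmf {..<k} 0 (\<lambda>_. pmf_of_set {..<n})"

lemma set_index_pmf:
  assumes "n \<ge> 1"
  shows "set_pmf (index_pmf n k) = PiE_dflt {..<k} 0 (\<lambda>_. {..<n})"
  using assms by (subst set_Pi_pmf) (auto simp: o_def lessThan_empty_iff)

lemma finite_set_index_pmf: "n \<ge> 1 \<Longrightarrow> finite (set_pmf (index_pmf n k))"
  by (auto simp: set_index_pmf)

lemma Eidx_0: "Eidx n 0 h = h (\<lambda>_. 0)"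
  by (simp add: Eidx_def)

lemma Eidx_Suc:
  assumes n: "n \<ge> 1"
  shows "Eidx n (Suc k) h = Eidx n k (\<lambda>\<sigma>. (\<Sum>y<n. h (\<sigma>(k := y))) / real n)"
proof -
  have "index_pmf n (Suc k) = pmf_of_set {..<n} \<bind> (\<lambda>y. map_pmf (\<lambda>\<sigma>. \<sigma>(k := y)) (index_pmf n k))"
    by (simp add: lessThan_Suc Pi_pmf_insert' map_pmf_def)
  then have "Eidx n (Suc k) h
      = (\<Sum>y<n. measure_pmf.expectation (map_pmf (\<lambda>\<sigma>. \<sigma>(k := y)) (index_pmf n k)) h /\<^sub>R real n)"
    unfolding Eidx_def using n finite_set_index_pmf[OF n]
    by (simp only:) (subst pmf_expectation_bind_pmf_of_set, auto simp: lessThan_empty_iff)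
  also have "\<dots> = (\<Sum>y<n. measure_pmf.expectation (index_pmf n k) (\<lambda>\<sigma>. h (\<sigma>(k := y)) / real n))"
    by (simp add: divide_inverse_commute)
  also have "\<dots> = measure_pmf.expectation (index_pmf n k) (\<lambda>\<sigma>. \<Sum>y<n. h (\<sigma>(k := y)) / real n)"
    using finite_set_index_pmf[OF n]
    by (subst Bochner_Integration.integral_sum) (auto intro: integrable_measure_pmf_finite)
  finally show ?thesis
    unfolding Eidx_def by (simp only: sum_divide_distrib)
qed

lemma Eidx_mono:
  assumes n: "n \<ge> 1" and le: "\<And>\<sigma>. \<forall>i<k. \<sigma> i < n \<Longrightarrow> h \<sigma> \<le> g \<sigma>"
  shows "Eidx n k h \<le> Eidx n k g"
  unfolding Eidx_def
proof (rule integral_mono_AE)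
  show "AE \<sigma> in index_pmf n k. h \<sigma> \<le> g \<sigma>"
    using le by (auto simp: AE_measure_pmf_iff set_index_pmf[OF n] PiE_dflt_def)
qed (use finite_set_index_pmf[OF n] integrable_measure_pmf_finite in blast)+

lemma Eidx_mult_left: "Eidx n k (\<lambda>\<sigma>. c * h \<sigma>) = c * Eidx n k h"
  by (simp add: Eidx_def)

lemma Eidx_divide: "Eidx n k (\<lambda>\<sigma>. h \<sigma> / c) = Eidx n k h / c"
  by (simp add: Eidx_def)

section \<open>Block quadratic forms\<close>

lemma sum_lessThan_add:
  fixes f :: "nat \<Rightarrow> 'a::comm_monoid_add"
  shows "(\<Sum>r<d + n. f r) = (\<Sum>r<d. f r) + (\<Sum>j<n. f (d + j))"
  by (induction n) (auto simp: add.assoc)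

lemma sum_lessThan_double:
  fixes f :: "nat \<Rightarrow> 'a::comm_monoid_add"
  shows "(\<Sum>s<2 * N. f s) = (\<Sum>m<N. f (2 * m) + f (2 * m + 1))"
  by (induction N) (auto simp: algebra_simps)

lemma sum_swap_pairs:
  "(\<Sum>k\<in>A. \<Sum>l\<in>B. \<Sum>r\<in>C. \<Sum>c\<in>D. g k l r c) = (\<Sum>r\<in>C. \<Sum>c\<in>D. \<Sum>k\<in>A. \<Sum>l\<in>B. g k l r c)"
proof -
  have "(\<Sum>k\<in>A. \<Sum>l\<in>B. \<Sum>r\<in>C. \<Sum>c\<in>D. g k l r c) = (\<Sum>k\<in>A. \<Sum>r\<in>C. \<Sum>l\<in>B. \<Sum>c\<in>D. g k l r c)"
    by (intro sum.cong refl sum.swap)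
  also have "\<dots> = (\<Sum>r\<in>C. \<Sum>k\<in>A. \<Sum>c\<in>D. \<Sum>l\<in>B. g k l r c)"
    by (subst sum.swap) (intro sum.cong refl sum.swap)
  also have "\<dots> = (\<Sum>r\<in>C. \<Sum>c\<in>D. \<Sum>k\<in>A. \<Sum>l\<in>B. g k l r c)"
    by (intro sum.cong refl sum.swap)
  finally show ?thesis .
qed

lemma kquad_kmv:
  fixes z :: "nat \<Rightarrow> 'v::real_inner"
  shows "kquad q Q (kmv m F z) = kquad m (mmul q (mmul q (tr F) Q) F) z"
proof -
  have "kquad q Q (kmv m F z) = (\<Sum>k<q. \<Sum>l<q. \<Sum>r<m. \<Sum>c<m. F k r * Q k l * F l c * (z r \<bullet> z c))"
    unfolding kquad_def kmv_def
    by (simp add: inner_sum_left inner_sum_right sum_distrib_left mult_ac) (rule sum.cong[OF refl], rule sum.cong[OF refl], rule sum.swap)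
  also have "\<dots> = (\<Sum>r<m. \<Sum>c<m. \<Sum>k<q. \<Sum>l<q. F k r * Q k l * F l c * (z r \<bullet> z c))"
    by (rule sum_swap_pairs)
  also have "\<dots> = kquad m (mmul q (mmul q (tr F) Q) F) z"
  proof -
    have "(\<Sum>k<q. \<Sum>l<q. F k r * Q k l * F l c * (z r \<bullet> z c))
        = (\<Sum>l<q. (\<Sum>k<q. F k r * Q k l) * F l c) * (z r \<bullet> z c)" for r c
      by (subst sum.swap) (simp add: sum_distrib_right)
    then show ?thesis unfolding kquad_def mmul_def tr_def by simp
  qed
  finally show ?thesis .
qed

lemma kquad_cong: "(\<And>a. a < d \<Longrightarrow> x a = y a) \<Longrightarrow> kquad d P x = kquad d P y"
  by (simp add: kquad_def)

lemma kquad_diff_matrix: "kquad d (\<lambda>r c. M r c - N r c) z = kquad d M z - kquad d N z"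
  by (simp add: kquad_def algebra_simps sum_subtractf)

lemma kquad_add_matrix: "kquad d (\<lambda>r c. M r c + N r c) z = kquad d M z + kquad d N z"
  by (simp add: kquad_def algebra_simps sum.distrib)

lemma kquad_scale_matrix: "kquad d (\<lambda>r c. a * M r c) z = a * kquad d M z"
  by (simp add: kquad_def sum_distrib_left mult.assoc)

lemma kquad_average_matrix:
  "kquad d (\<lambda>r c. (\<Sum>i<m. M i r c) / real m) z = (\<Sum>i<m. kquad d (M i) z) / real m"
  unfolding kquad_def
  by (simp add: sum_divide_distrib[symmetric] sum_distrib_right sum.swap[of _ "{..<m}"])

lemma kquad_coord:
  fixes \<xi> :: "nat \<Rightarrow> real^'p"
  shows "kquad d P \<xi> = (\<Sum>q\<in>UNIV. quad d P (\<lambda>a. \<xi> a $ q))"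
  unfolding kquad_def quad_def inner_vec_def
  by (simp add: sum_distrib_left mult_ac) (rule trans[OF sum.cong[OF refl sum.swap] sum.swap])

lemma kquad_nonpos_if_nsd:
  fixes z :: "nat \<Rightarrow> real^'p"
  assumes "nsd d M"
  shows "kquad d M z \<le> 0"
  using assms unfolding kquad_coord nsd_def by (simp add: sum_nonpos)

definition stack :: "nat \<Rightarrow> (nat \<Rightarrow> 'a) \<Rightarrow> (nat \<Rightarrow> 'a) \<Rightarrow> nat \<Rightarrow> 'a" where
  "stack d x w = (\<lambda>r. if r < d then x r else w (r - d))"

lemma kmv_hcat_stack: "kmv (d + n) (hcat d A B) (stack d x w) = (\<lambda>a. kmv d A x a + kmv n B w a)"
  by (simp add: kmv_def hcat_def stack_def sum_lessThan_add)

lemma kquad_stack_corner: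
  "kquad (d + n) (\<lambda>r c. if r < d \<and> c < d then P r c else 0) (stack d x w) = kquad d P x"
  by (simp add: kquad_def stack_def sum_lessThan_add)

lemma mmul_tr_hcat:
  assumes "r < d + n" "c < d + n"
  shows "mmul q (mmul q (tr (hcat d A B)) P) (hcat d A B) r c =
    block4 d d (mmul q (mmul q (tr A) P) A) (mmul q (mmul q (tr A) P) B)
               (mmul q (mmul q (tr B) P) A) (mmul q (mmul q (tr B) P) B) r c"
  using assms by (simp add: mmul_def tr_def hcat_def block4_def)

lemma kquad_block4_stack:
  "kquad (d + n) (block4 d d (mmul q (mmul q (tr A) P) A) (mmul q (mmul q (tr A) P) B)
                            (mmul q (mmul q (tr B) P) A) (mmul q (mmul q (tr B) P) B)) (stack d x w)
   = kquad q P (\<lambda>a. kmv d A x a + kmv n B w a)"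
proof -
  have "kquad q P (\<lambda>a. kmv d A x a + kmv n B w a) = kquad q P (kmv (d + n) (hcat d A B) (stack d x w))"
    by (simp add: kmv_hcat_stack)
  also have "\<dots> = kquad (d + n) (mmul q (mmul q (tr (hcat d A B)) P) (hcat d A B)) (stack d x w)"
    by (rule kquad_kmv)
  also have "\<dots> = kquad (d + n) (block4 d d (mmul q (mmul q (tr A) P) A) (mmul q (mmul q (tr A) P) B)
                            (mmul q (mmul q (tr B) P) A) (mmul q (mmul q (tr B) P) B)) (stack d x w)"
    unfolding kquad_def by (intro sum.cong refl) (simp add: mmul_tr_hcat)
  finally show ?thesis ..
qed

lemma kquad_lmi_block:
  "kquad (d + n) (block4 d d
      (\<lambda>a b. (\<Sum>i<m. mmul d (mmul d (tr (At i)) P) (At i) a b) / real m - c * P a b)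
      (\<lambda>a b. (\<Sum>i<m. mmul d (mmul d (tr (At i)) P) (Bt i) a b) / real m)
      (\<lambda>a b. (\<Sum>i<m. mmul d (mmul d (tr (Bt i)) P) (At i) a b) / real m)
      (\<lambda>a b. (\<Sum>i<m. mmul d (mmul d (tr (Bt i)) P) (Bt i) a b) / real m)) (stack d x w)
   = (\<Sum>i<m. kquad d P (\<lambda>a. kmv d (At i) x a + kmv n (Bt i) w a)) / real m - c * kquad d P x"
proof -
  let ?X = "\<lambda>i. block4 d d (mmul d (mmul d (tr (At i)) P) (At i)) (mmul d (mmul d (tr (At i)) P) (Bt i))
                           (mmul d (mmul d (tr (Bt i)) P) (At i)) (mmul d (mmul d (tr (Bt i)) P) (Bt i))"
  have "block4 d d
      (\<lambda>a b. (\<Sum>i<m. mmul d (mmul d (tr (At i)) P) (At i) a b) / real m - c * P a b)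
      (\<lambda>a b. (\<Sum>i<m. mmul d (mmul d (tr (At i)) P) (Bt i) a b) / real m)
      (\<lambda>a b. (\<Sum>i<m. mmul d (mmul d (tr (Bt i)) P) (At i) a b) / real m)
      (\<lambda>a b. (\<Sum>i<m. mmul d (mmul d (tr (Bt i)) P) (Bt i) a b) / real m)
    = (\<lambda>r s. (\<Sum>i<m. ?X i r s) / real m - c * (if r < d \<and> s < d then P r s else 0))"
    by (simp add: fun_eq_iff block4_def)
  then show ?thesis
    by (simp add: kquad_diff_matrix kquad_average_matrix kquad_scale_matrix kquad_block4_stack
        kquad_stack_corner)
qed

section \<open>The sector multiplier and the one-step decrease\<close>

abbreviation sector_multiplier :: "nat \<Rightarrow> real \<Rightarrow> real \<Rightarrow> rmat" where
  "sector_multiplier n lam1 lam2 \<equiv>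
     kron 2 2 (block4 1 1 (\<lambda>_ _. lam1) zerom zerom (\<lambda>a b. lam2 / real n * idm n a b))
              (\<lambda>a b. if a = b then 0 else 1)"

abbreviation Dpsi :: "nat \<Rightarrow> nat \<Rightarrow> real \<Rightarrow> real \<Rightarrow> real \<Rightarrow> rmat \<Rightarrow> rmat" where
  "Dpsi d n L \<nu> \<gamma> C \<equiv> hcat d (mmul 1 (Dpsi1 L \<nu> \<gamma>) C) (Dpsi2 n)"

lemma kquad_sector_multiplier:
  fixes h :: "nat \<Rightarrow> 'v::real_inner"
  shows "kquad (2 * n + 2) (sector_multiplier n lam1 lam2) h
    = 2 * lam1 * (h 0 \<bullet> h 1) + (\<Sum>i<n. 2 * (lam2 / real n) * (h (2 * i + 2) \<bullet> h (2 * i + 3)))"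
proof -
  define B where "B = block4 1 1 (\<lambda>_ _. lam1) zerom zerom (\<lambda>a b. lam2 / real n * idm n a b)"
  define \<beta> where "\<beta> = (\<lambda>m::nat. if m = 0 then lam1 else lam2 / real n)"
  have B: "B m m' = (if m = m' then \<beta> m else 0)" if "m < Suc n" "m' < Suc n" for m m'
    using that by (auto simp: B_def \<beta>_def block4_def zerom_def idm_def)
  have "kquad (2 * n + 2) (sector_multiplier n lam1 lam2) h
      = (\<Sum>m<Suc n. \<Sum>m'<Suc n. B m m' * (h (2 * m) \<bullet> h (2 * m' + 1)) + B m m' * (h (2 * m + 1) \<bullet> h (2 * m')))"
  proof -
    have "2 * n + 2 = 2 * Suc n" by simp
    moreover have "kron 2 2 B (\<lambda>a b. if a = b then 0 else 1) (2 * m) (2 * m') = 0"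
      "kron 2 2 B (\<lambda>a b. if a = b then 0 else 1) (2 * m) (2 * m' + 1) = B m m'"
      "kron 2 2 B (\<lambda>a b. if a = b then 0 else 1) (2 * m + 1) (2 * m') = B m m'"
      "kron 2 2 B (\<lambda>a b. if a = b then 0 else 1) (2 * m + 1) (2 * m' + 1) = 0" for m m'
      by (simp_all add: kron_def)
    ultimately show ?thesis
      unfolding B_def[symmetric] kquad_def by (simp only: sum_lessThan_double) (simp add: sum.distrib)
  qed
  also have "\<dots> = (\<Sum>m<Suc n. \<beta> m * (h (2 * m) \<bullet> h (2 * m + 1)) + \<beta> m * (h (2 * m + 1) \<bullet> h (2 * m)))"
  proof (intro sum.cong refl)
    fix m assume m: "m \<in> {..<Suc n}"
    have "(\<Sum>m'<Suc n. B m m' * (h (2 * m) \<bullet> h (2 * m' + 1)) + B m m' * (h (2 * m + 1) \<bullet> h (2 * m')))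
        = (\<Sum>m'<Suc n. if m = m' then \<beta> m * (h (2 * m) \<bullet> h (2 * m + 1)) + \<beta> m * (h (2 * m + 1) \<bullet> h (2 * m)) else 0)"
      using m by (intro sum.cong refl) (simp add: B)
    also have "\<dots> = \<beta> m * (h (2 * m) \<bullet> h (2 * m + 1)) + \<beta> m * (h (2 * m + 1) \<bullet> h (2 * m))"
      using m by simp
    finally show "(\<Sum>m'<Suc n. B m m' * (h (2 * m) \<bullet> h (2 * m' + 1)) + B m m' * (h (2 * m + 1) \<bullet> h (2 * m')))
        = \<beta> m * (h (2 * m) \<bullet> h (2 * m + 1)) + \<beta> m * (h (2 * m + 1) \<bullet> h (2 * m))" .
  qed
  also have "\<dots> = 2 * lam1 * (h 0 \<bullet> h 1) + (\<Sum>i<n. 2 * (lam2 / real n) * (h (2 * i + 2) \<bullet> h (2 * i + 3)))"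
    by (subst sum.lessThan_Suc_shift) (simp add: \<beta>_def inner_commute algebra_simps eval_nat_numeral)
  finally show ?thesis .
qed

lemma kmv_Dpsi_stack:
  "kmv (d + n) (Dpsi d n L \<nu> \<gamma> C) (stack d e w) = (\<lambda>s. Dpsi1 L \<nu> \<gamma> s 0 *\<^sub>R kmv d C e 0 + kmv n (Dpsi2 n) w s)"
  by (simp add: kmv_hcat_stack) (simp add: kmv_def mmul_def scaleR_sum_right)

lemma Dpsi1_rows:
  "Dpsi1 L \<nu> \<gamma> 0 0 = L" "Dpsi1 L \<nu> \<gamma> 1 0 = \<nu>"
  "Dpsi1 L \<nu> \<gamma> (2 * i + 2) 0 = L" "Dpsi1 L \<nu> \<gamma> (2 * i + 3) 0 = \<gamma>"
  by (simp_all add: Dpsi1_def)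

lemma kmv_Dpsi2_rows:
  fixes w :: "nat \<Rightarrow> 'v::real_vector"
  shows "kmv n (Dpsi2 n) w 0 = - (\<Sum>j<n. w j) /\<^sub>R real n"
    and "kmv n (Dpsi2 n) w 1 = (\<Sum>j<n. w j) /\<^sub>R real n"
    and "i < n \<Longrightarrow> kmv n (Dpsi2 n) w (2 * i + 2) = - w i"
    and "i < n \<Longrightarrow> kmv n (Dpsi2 n) w (2 * i + 3) = w i"
  by (simp_all add: kmv_def Dpsi2_def scaleR_sum_right sum_negf[symmetric] divide_inverse_commute
      if_distrib[of "\<lambda>a. a *\<^sub>R _"] cong: if_cong)

lemma sector_form_eq_inner:
  fixes u d :: "'v::real_inner"
  shows "2 * L * \<nu> * (u \<bullet> u) + 2 * (L - \<nu>) * (u \<bullet> d) + (-2) * (d \<bullet> d)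
       = 2 * ((L *\<^sub>R u - d) \<bullet> (\<nu> *\<^sub>R u + d))"
  by (simp add: inner_diff_left inner_add_right inner_commute[of d u] algebra_simps)

lemma kquad_sector_multiplier_Dpsi_nonneg:
  fixes u :: "'v::real_inner" and w :: "nat \<Rightarrow> 'v"
  assumes "0 \<le> lam1" "0 \<le> lam2"
    and avg: "0 \<le> (L *\<^sub>R u - (\<Sum>j<n. w j) /\<^sub>R real n) \<bullet> (\<nu> *\<^sub>R u + (\<Sum>j<n. w j) /\<^sub>R real n)"
    and each: "\<And>i. i < n \<Longrightarrow> 0 \<le> (L *\<^sub>R u - w i) \<bullet> (\<gamma> *\<^sub>R u + w i)"
  shows "0 \<le> kquad (2 * n + 2) (sector_multiplier n lam1 lam2)
                 (\<lambda>s. Dpsi1 L \<nu> \<gamma> s 0 *\<^sub>R u + kmv n (Dpsi2 n) w s)"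
proof -
  define h where "h = (\<lambda>s. Dpsi1 L \<nu> \<gamma> s 0 *\<^sub>R u + kmv n (Dpsi2 n) w s)"
  have "h 0 = L *\<^sub>R u - (\<Sum>j<n. w j) /\<^sub>R real n" "h 1 = \<nu> *\<^sub>R u + (\<Sum>j<n. w j) /\<^sub>R real n"
    unfolding h_def Dpsi1_rows kmv_Dpsi2_rows by simp_all
  moreover have "h (2 * i + 2) = L *\<^sub>R u - w i" "h (2 * i + 3) = \<gamma> *\<^sub>R u + w i" if "i < n" for i
    unfolding h_def Dpsi1_rows kmv_Dpsi2_rows(3,4)[OF that] by simp_all
  ultimately have "0 \<le> kquad (2 * n + 2) (sector_multiplier n lam1 lam2) h"
    unfolding kquad_sector_multiplier using assms by (auto intro!: sum_nonneg add_nonneg_nonneg)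
  then show ?thesis by (simp only: h_def)
qed

lemma expected_Lyapunov_step:
  fixes G :: "nat \<Rightarrow> real^'p \<Rightarrow> real^'p" and xs :: "real^'p" and xis \<xi> :: "nat \<Rightarrow> real^'p"
  assumes xis_fix: "\<forall>i<n. \<forall>a<nxi. xis a = kmv nxi (At i) xis a + kmv n (Bt i) (\<lambda>j. G j xs) a"
    and xis_out: "kmv nxi Ct xis 0 = xs"
    and sector_avg: "\<forall>x. let u = x - xs; d = (\<Sum>j<n. G j x) /\<^sub>R real n - (\<Sum>j<n. G j xs) /\<^sub>R real n
                     in 2 * L * \<nu> * (u \<bullet> u) + 2 * (L - \<nu>) * (u \<bullet> d) + (-2) * (d \<bullet> d) \<ge> 0"
    and sector_i: "\<forall>x. \<forall>i<n. let u = x - xs; d = G i x - G i xs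
                     in 2 * L * \<gamma> * (u \<bullet> u) + 2 * (L - \<gamma>) * (u \<bullet> d) + (-2) * (d \<bullet> d) \<ge> 0"
    and lam1_nn: "lam1 \<ge> 0" and lam2_nn: "lam2 \<ge> 0"
    and LMI: "nsd (nxi + n)
      (\<lambda>r c. block4 nxi nxi
          (\<lambda>a b. (\<Sum>i<n. mmul nxi (mmul nxi (tr (At i)) P) (At i) a b) / real n - \<rho>^2 * P a b)
          (\<lambda>a b. (\<Sum>i<n. mmul nxi (mmul nxi (tr (At i)) P) (Bt i) a b) / real n)
          (\<lambda>a b. (\<Sum>i<n. mmul nxi (mmul nxi (tr (Bt i)) P) (At i) a b) / real n)
          (\<lambda>a b. (\<Sum>i<n. mmul nxi (mmul nxi (tr (Bt i)) P) (Bt i) a b) / real n) r c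
        + mmul (2 * n + 2)
            (mmul (2 * n + 2) (tr (Dpsi nxi n L \<nu> \<gamma> Ct)) (sector_multiplier n lam1 lam2))
            (Dpsi nxi n L \<nu> \<gamma> Ct) r c)"
  shows "(\<Sum>y<n. kquad nxi P (\<lambda>a. kmv nxi (At y) \<xi> a + kmv n (Bt y) (\<lambda>j. G j (kmv nxi Ct \<xi> 0)) a - xis a))
           / real n
         \<le> \<rho>^2 * kquad nxi P (\<lambda>a. \<xi> a - xis a)"
proof -
  define v where "v = kmv nxi Ct \<xi> 0"
  define e where "e = (\<lambda>a. \<xi> a - xis a)"
  define w where "w = (\<lambda>j. G j v - G j xs)"
  define M1 where "M1 = block4 nxi nxi
          (\<lambda>a b. (\<Sum>i<n. mmul nxi (mmul nxi (tr (At i)) P) (At i) a b) / real n - \<rho>^2 * P a b)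
          (\<lambda>a b. (\<Sum>i<n. mmul nxi (mmul nxi (tr (At i)) P) (Bt i) a b) / real n)
          (\<lambda>a b. (\<Sum>i<n. mmul nxi (mmul nxi (tr (Bt i)) P) (At i) a b) / real n)
          (\<lambda>a b. (\<Sum>i<n. mmul nxi (mmul nxi (tr (Bt i)) P) (Bt i) a b) / real n)"
  define M2 where "M2 = mmul (2 * n + 2)
            (mmul (2 * n + 2) (tr (Dpsi nxi n L \<nu> \<gamma> Ct)) (sector_multiplier n lam1 lam2))
            (Dpsi nxi n L \<nu> \<gamma> Ct)"
  have error_step: "kmv nxi (At y) \<xi> a + kmv n (Bt y) (\<lambda>j. G j v) a - xis a
      = kmv nxi (At y) e a + kmv n (Bt y) w a" if "y < n" "a < nxi" for y a
    using xis_fix that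
    by (simp add: kmv_def e_def w_def scaleR_diff_right sum_subtractf algebra_simps)
  have decrease: "(\<Sum>y<n. kquad nxi P (\<lambda>a. kmv nxi (At y) \<xi> a + kmv n (Bt y) (\<lambda>j. G j v) a - xis a)) / real n
      - \<rho>^2 * kquad nxi P e = kquad (nxi + n) M1 (stack nxi e w)"
    unfolding M1_def kquad_lmi_block
    by (simp add: error_step cong: kquad_cong)
  define u where "u = v - xs"
  have "kmv nxi Ct e 0 = u"
    unfolding u_def e_def v_def xis_out[symmetric] by (simp add: kmv_def scaleR_diff_right sum_subtractf)
  then have "kquad (nxi + n) M2 (stack nxi e w) = kquad (2 * n + 2) (sector_multiplier n lam1 lam2)
      (\<lambda>s. Dpsi1 L \<nu> \<gamma> s 0 *\<^sub>R u + kmv n (Dpsi2 n) w s)"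
    unfolding M2_def kquad_kmv[symmetric] kmv_Dpsi_stack by simp
  also have "\<dots> \<ge> 0"
  proof (rule kquad_sector_multiplier_Dpsi_nonneg[OF lam1_nn lam2_nn])
    have "(\<Sum>j<n. w j) /\<^sub>R real n = (\<Sum>j<n. G j v) /\<^sub>R real n - (\<Sum>j<n. G j xs) /\<^sub>R real n"
      by (simp add: w_def sum_subtractf scaleR_diff_right)
    then show "0 \<le> (L *\<^sub>R u - (\<Sum>j<n. w j) /\<^sub>R real n) \<bullet> (\<nu> *\<^sub>R u + (\<Sum>j<n. w j) /\<^sub>R real n)"
      using sector_avg[rule_format, of v] unfolding Let_def sector_form_eq_inner u_def by simp
    show "0 \<le> (L *\<^sub>R u - w i) \<bullet> (\<gamma> *\<^sub>R u + w i)" if "i < n" for i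
      using sector_i[rule_format, OF that, of v] unfolding Let_def sector_form_eq_inner u_def w_def by simp
  qed
  finally have "0 \<le> kquad (nxi + n) M2 (stack nxi e w)" .
  moreover have "kquad (nxi + n) M1 (stack nxi e w) + kquad (nxi + n) M2 (stack nxi e w) \<le> 0"
    using kquad_nonpos_if_nsd[OF LMI] unfolding M1_def M2_def kquad_add_matrix .
  ultimately show ?thesis
    using decrease unfolding v_def e_def by linarith
qed

section \<open>Rayleigh quotient bounds and the condition number\<close>

definition sqnorm :: "nat \<Rightarrow> (nat \<Rightarrow> real) \<Rightarrow> real" where
  "sqnorm d x = (\<Sum>a<d. (x a)^2)"

lemma sqnorm_nonneg: "0 \<le> sqnorm d x"
  by (simp add: sqnorm_def sum_nonneg)

lemma sqnorm_eq_0_iff: "sqnorm d x = 0 \<longleftrightarrow> (\<forall>a<d. x a = 0)"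
  by (auto simp: sqnorm_def sum_nonneg_eq_0_iff)

lemma sqnorm_pos: "i < d \<Longrightarrow> x i \<noteq> 0 \<Longrightarrow> 0 < sqnorm d x"
  using sqnorm_nonneg[of d x] sqnorm_eq_0_iff[of d x] by force

lemma quad_eq_0: "(\<And>a. a < d \<Longrightarrow> x a = 0) \<Longrightarrow> quad d Q x = 0"
  by (simp add: quad_def)

lemma quad_scale: "quad d Q (\<lambda>a. c * x a) = c^2 * quad d Q x"
  by (simp add: quad_def sum_distrib_left power2_eq_square mult_ac)

lemma sqnorm_scale: "sqnorm d (\<lambda>a. c * x a) = c^2 * sqnorm d x"
  by (simp add: sqnorm_def sum_distrib_left power_mult_distrib)

lemma quad_add_scaled:
  assumes "symm d Q"
  shows "quad d Q (\<lambda>a. x a + t * y a)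
       = quad d Q x + 2 * t * (\<Sum>i<d. \<Sum>j<d. y i * Q i j * x j) + t^2 * quad d Q y"
proof -
  have "(\<Sum>i<d. \<Sum>j<d. x i * Q i j * y j) = (\<Sum>j<d. \<Sum>i<d. y j * Q j i * x i)"
    using assms unfolding symm_def by (subst sum.swap) (intro sum.cong refl, simp)
  moreover have "quad d Q (\<lambda>a. x a + t * y a) = quad d Q x + t * (\<Sum>i<d. \<Sum>j<d. x i * Q i j * y j)
      + t * (\<Sum>i<d. \<Sum>j<d. y i * Q i j * x j) + t^2 * quad d Q y"
    by (simp add: quad_def algebra_simps sum.distrib sum_distrib_left power2_eq_square)
  ultimately show ?thesis by simp
qed

lemma sqnorm_add_scaled:
  "sqnorm d (\<lambda>a. x a + t * y a) = sqnorm d x + 2 * t * (\<Sum>i<d. y i * x i) + t^2 * sqnorm d y"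
  by (simp add: sqnorm_def algebra_simps sum.distrib sum_distrib_left power2_eq_square)

lemma quad_eigvec: "(\<forall>i<d. (\<Sum>j<d. Q i j * v j) = l * v i) \<Longrightarrow> quad d Q v = l * sqnorm d v"
  by (simp add: quad_def sqnorm_def mult.assoc sum_distrib_left[symmetric] power2_eq_square mult_ac)

lemma linear_coeff_eq_0_if_nonpos:
  fixes a b :: real
  assumes "\<And>t. a * t + b * t^2 \<le> 0"
  shows "a = 0"
proof -
  define c where "c = \<bar>b\<bar> + 1"
  have "c > 0" "c + b \<ge> 1" by (simp_all add: c_def)
  have "(a * (a / c) + b * (a / c)^2) * c^2 \<le> 0"
    using assms[of "a / c"] by (simp add: mult_nonpos_nonneg)
  also have "(a * (a / c) + b * (a / c)^2) * c^2 = a^2 * (c + b)"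
    using \<open>c > 0\<close> by (simp add: field_simps power2_eq_square)
  finally have "a^2 * (c + b) \<le> 0" .
  moreover have "a^2 \<le> a^2 * (c + b)"
    using \<open>c + b \<ge> 1\<close> by (simp add: mult_le_cancel_left1)
  ultimately have "a^2 \<le> 0" by linarith
  then show ?thesis by simp
qed

text \<open>R^d is embedded into the product space nat \<Rightarrow> real with all coordinates beyond d fixed to 0.\<close>

lemma compact_unit_sphere:
  "compact (Pi\<^sub>E UNIV (\<lambda>i. if i < d then {-1..1::real} else {0}) \<inter> {x. sqnorm d x = 1})"
proof (rule compact_Int_closed)
  have "compactin (product_topology (\<lambda>_. euclidean) UNIV) (Pi\<^sub>E UNIV (\<lambda>i::nat. if i < d then {-1..1::real} else {0}))"
    by (subst compactin_PiE) auto
  then show "compact (Pi\<^sub>E UNIV (\<lambda>i::nat. if i < d then {-1..1::real} else {0}))"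
    by (simp add: euclidean_product_topology)
  show "closed {x. sqnorm d x = 1}"
    unfolding sqnorm_def
    by (intro closed_Collect_eq continuous_intros
        continuous_on_subset[OF continuous_on_product_coordinates]) auto
qed

lemma quad_cong: "(\<And>a. a < d \<Longrightarrow> x a = y a) \<Longrightarrow> quad d Q x = quad d Q y"
  by (simp add: quad_def)

lemma sqnorm_cong: "(\<And>a. a < d \<Longrightarrow> x a = y a) \<Longrightarrow> sqnorm d x = sqnorm d y"
  by (simp add: sqnorm_def)

lemma quad_uminus: "quad d (\<lambda>i j. - Q i j) x = - quad d Q x"
  by (simp add: quad_def sum_negf)

lemma continuous_on_quad: "continuous_on S (quad d Q)"
  unfolding quad_def
  by (intro continuous_intros continuous_on_subset[OF continuous_on_product_coordinates]) auto

lemma quad_attains_max_on_unit_sphere: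
  assumes "d \<ge> 1"
  obtains x0 where "sqnorm d x0 = 1" "\<And>x. quad d Q x \<le> quad d Q x0 * sqnorm d x"
proof -
  define S where "S = Pi\<^sub>E UNIV (\<lambda>i. if i < d then {-1..1::real} else {0}) \<inter> {x. sqnorm d x = 1}"
  have "(\<lambda>i. if i = 0 then 1 else 0) \<in> S"
    using assms by (auto simp: S_def sqnorm_def PiE_def if_distrib[of "\<lambda>x. x^2"] cong: if_cong)
  then obtain x0 where "x0 \<in> S" and x0_max: "\<And>y. y \<in> S \<Longrightarrow> quad d Q y \<le> quad d Q x0"
    using continuous_attains_sup[OF compact_unit_sphere[of d, folded S_def] _ continuous_on_quad] by blast
  have "quad d Q x \<le> quad d Q x0 * sqnorm d x" for x
  proof (cases "sqnorm d x = 0")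
    case True
    then have "quad d Q x = 0" by (simp add: quad_eq_0 sqnorm_eq_0_iff)
    with True show ?thesis by simp
  next
    case False
    then have pos: "0 < sqnorm d x" using sqnorm_nonneg[of d x] by linarith
    define s where "s = sqrt (sqnorm d x)"
    have s: "s > 0" "s^2 = sqnorm d x"
      using pos by (auto simp: s_def)
    define y where "y = (\<lambda>a. if a < d then (1 / s) * x a else 0)"
    have "sqnorm d y = sqnorm d (\<lambda>a. (1 / s) * x a)"
      by (rule sqnorm_cong) (simp add: y_def)
    then have ny: "sqnorm d y = 1"
      using s pos unfolding sqnorm_scale by (simp add: power_divide)
    have "y i \<in> (if i < d then {-1..1} else {0})" for i
    proof (cases "i < d")
      case True
      have "(y i)^2 \<le> sqnorm d y"
        unfolding sqnorm_def using True by (intro member_le_sum) auto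
      then show ?thesis using ny True by (simp add: abs_square_le_1 abs_le_iff)
    qed (simp add: y_def)
    then have "y \<in> S" using ny by (simp add: S_def PiE_iff)
    moreover have "quad d Q y = (1 / s)^2 * quad d Q x"
      unfolding quad_scale[symmetric] by (rule quad_cong) (simp add: y_def)
    ultimately have "(1 / s)^2 * quad d Q x \<le> quad d Q x0"
      using x0_max by metis
    then show ?thesis
      using s pos by (simp add: power_divide pos_divide_le_eq mult.commute)
  qed
  moreover have "sqnorm d x0 = 1" using \<open>x0 \<in> S\<close> by (simp add: S_def)
  ultimately show ?thesis using that by blast
qed

text \<open>A maximiser of the Rayleigh quotient is an eigenvector: perturbing it in direction e_i must not
  increase the quotient, which kills the first-order term, i.e. the i-th residual of the eigen equation.\<close>

lemma eigval_of_Rayleigh_maximizer: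
  assumes Q: "symm d Q" and x0: "sqnorm d x0 = 1"
    and x0_max: "\<And>x. quad d Q x \<le> quad d Q x0 * sqnorm d x"
  shows "eigval d Q (quad d Q x0)"
proof -
  have "(\<Sum>j<d. Q i j * x0 j) = quad d Q x0 * x0 i" if "i < d" for i
  proof -
    define y where "y = (\<lambda>a. if a = i then 1 else 0 :: real)"
    have "(\<Sum>a<d. \<Sum>b<d. y a * Q a b * x0 b) = (\<Sum>a<d. y a * (\<Sum>b<d. Q a b * x0 b))"
      by (simp add: sum_distrib_left mult.assoc)
    also have "\<dots> = (\<Sum>j<d. Q i j * x0 j)"
      using that by (simp add: y_def if_distrib[of "\<lambda>c. c * _"] cong: if_cong)
    finally have Qy: "(\<Sum>a<d. \<Sum>b<d. y a * Q a b * x0 b) = (\<Sum>j<d. Q i j * x0 j)" .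
    have yx0: "(\<Sum>a<d. y a * x0 a) = x0 i"
      using that by (simp add: y_def if_distrib[of "\<lambda>c. c * _"] cong: if_cong)
    have "2 * ((\<Sum>j<d. Q i j * x0 j) - quad d Q x0 * x0 i) * t
          + (quad d Q y - quad d Q x0 * sqnorm d y) * t^2 \<le> 0" for t
      using x0_max[of "\<lambda>a. x0 a + t * y a"]
      unfolding quad_add_scaled[OF Q] sqnorm_add_scaled Qy yx0 x0 by (simp add: algebra_simps)
    then have "2 * ((\<Sum>j<d. Q i j * x0 j) - quad d Q x0 * x0 i) = 0"
      by (rule linear_coeff_eq_0_if_nonpos)
    then show ?thesis by simp
  qed
  moreover have "\<exists>i<d. x0 i \<noteq> 0"
    using x0 sqnorm_eq_0_iff[of d x0] by auto
  ultimately show ?thesis unfolding eigval_def by blast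
qed

lemma eigval_le_if_Rayleigh_bound:
  assumes "eigval d Q l" and "\<And>x. quad d Q x \<le> \<mu> * sqnorm d x"
  shows "l \<le> \<mu>"
proof -
  obtain v i where "i < d" "v i \<noteq> 0" "\<forall>i<d. (\<Sum>j<d. Q i j * v j) = l * v i"
    using assms(1) unfolding eigval_def by blast
  then show ?thesis
    using assms(2)[of v] quad_eigvec[of d Q v l] sqnorm_pos[of i d v] by simp
qed

lemma eigval_uminus_iff: "eigval d (\<lambda>i j. - Q i j) l \<longleftrightarrow> eigval d Q (- l)"
  unfolding eigval_def by (simp add: sum_negf neg_eq_iff_add_eq_0 eq_neg_iff_add_eq_0)

lemma finite_eigvals: "finite {l. eigval d Q l}"
proof -
  define A where "A = mat d d (\<lambda>(i, j). Q i j)"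
  have A: "A \<in> carrier_mat d d" by (simp add: A_def)
  have "eigenvalue A l" if l: "eigval d Q l" for l
  proof -
    obtain v where v: "\<exists>i<d. v i \<noteq> 0" "\<forall>i<d. (\<Sum>j<d. Q i j * v j) = l * v i"
      using l unfolding eigval_def by blast
    have "eigenvector A (vec d v) l"
      unfolding eigenvector_def
    proof (intro conjI)
      show "vec d v \<noteq> 0\<^sub>v (dim_row A)"
        using v(1) by (auto simp: A_def vec_eq_iff)
      show "A *\<^sub>v vec d v = l \<cdot>\<^sub>v vec d v"
        using v(2) by (auto simp: A_def scalar_prod_def atLeast0LessThan)
    qed (simp add: A_def)
    then show ?thesis unfolding eigenvalue_def by blast
  qed
  then have "{l. eigval d Q l} \<subseteq> {l. poly (char_poly A) l = 0}"
    using eigenvalue_root_char_poly[OF A] by blast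
  moreover have "char_poly A \<noteq> 0"
    using degree_monic_char_poly[OF A] by auto
  ultimately show ?thesis
    using poly_roots_finite finite_subset by blast
qed

lemma cond_Rayleigh_bounds:
  assumes "d \<ge> 1" and P_sym: "symm d P" and P_pd: "pdef d P"
  obtains lmax lmin where "cond d P = lmax / lmin" "0 < lmin"
    "\<And>x. quad d P x \<le> lmax * sqnorm d x" "\<And>x. lmin * sqnorm d x \<le> quad d P x"
proof -
  define E where "E = {l. eigval d P l}"
  obtain x0 where x0: "sqnorm d x0 = 1" "\<And>x. quad d P x \<le> quad d P x0 * sqnorm d x"
    using quad_attains_max_on_unit_sphere[OF assms(1)] by blast
  have "Max E = quad d P x0"
    using finite_eigvals eigval_of_Rayleigh_maximizer[OF P_sym x0] eigval_le_if_Rayleigh_bound x0(2)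
    unfolding E_def by (intro Max_eqI) auto
  have "symm d (\<lambda>i j. - P i j)"
    using P_sym by (simp add: symm_def)
  obtain x1 where x1: "sqnorm d x1 = 1"
    "\<And>x. quad d (\<lambda>i j. - P i j) x \<le> quad d (\<lambda>i j. - P i j) x1 * sqnorm d x"
    using quad_attains_max_on_unit_sphere[OF assms(1)] by blast
  have lower: "quad d P x1 * sqnorm d x \<le> quad d P x" for x
    using x1(2)[of x] by (simp add: quad_uminus)
  have "Min E = quad d P x1"
  proof (intro Min_eqI)
    show "quad d P x1 \<in> E"
      using eigval_of_Rayleigh_maximizer[OF \<open>symm d (\<lambda>i j. - P i j)\<close> x1]
      unfolding E_def by (simp add: quad_uminus eigval_uminus_iff)
    show "quad d P x1 \<le> l" if "l \<in> E" for l
    proof -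
      have "- l \<le> quad d (\<lambda>i j. - P i j) x1"
        using that by (intro eigval_le_if_Rayleigh_bound[OF _ x1(2)]) (simp add: E_def eigval_uminus_iff)
      then show ?thesis by (simp add: quad_uminus)
    qed
  qed (simp add: E_def finite_eigvals)
  moreover have "0 < quad d P x1"
    using P_pd x1(1) sqnorm_eq_0_iff[of d x1] unfolding pdef_def by auto
  ultimately show ?thesis
    using that[of "quad d P x0" "quad d P x1"] x0(2) lower \<open>Max E = quad d P x0\<close>
    unfolding cond_def E_def[symmetric] by (simp add: mult.commute)
qed

lemma bnorm2_coord:
  fixes \<xi> :: "nat \<Rightarrow> real^'p"
  shows "bnorm2 d \<xi> = (\<Sum>q\<in>UNIV. sqnorm d (\<lambda>a. \<xi> a $ q))"
  unfolding bnorm2_def sqnorm_def power2_norm_eq_inner inner_vec_def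
  by (simp add: power2_eq_square sum.swap[of _ "{..<d}" UNIV])

lemma kquad_le_bnorm2:
  fixes \<xi> :: "nat \<Rightarrow> real^'p"
  assumes "\<And>x. quad d P x \<le> c * sqnorm d x"
  shows "kquad d P \<xi> \<le> c * bnorm2 d \<xi>"
  unfolding kquad_coord bnorm2_coord sum_distrib_left by (intro sum_mono assms)

lemma bnorm2_le_kquad:
  fixes \<xi> :: "nat \<Rightarrow> real^'p"
  assumes "\<And>x. c * sqnorm d x \<le> quad d P x"
  shows "c * bnorm2 d \<xi> \<le> kquad d P \<xi>"
  unfolding kquad_coord bnorm2_coord sum_distrib_left by (intro sum_mono assms)

section \<open>Geometric decay along the jump system\<close>

lemma traj_cong_prefix:
  "(\<And>i. i < k \<Longrightarrow> \<sigma> i = \<sigma>' i) \<Longrightarrow> traj nxi n At Bt Ct G xi0 \<sigma> k = traj nxi n At Bt Ct G xi0 \<sigma>' k"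
  by (induction k) (simp_all add: Let_def)

lemma traj_Suc_fun_upd:
  "traj nxi n At Bt Ct G xi0 (\<sigma>(k := y)) (Suc k) =
    (\<lambda>a. kmv nxi (At y) (traj nxi n At Bt Ct G xi0 \<sigma> k) a
       + kmv n (Bt y) (\<lambda>j. G j (kmv nxi Ct (traj nxi n At Bt Ct G xi0 \<sigma> k) 0)) a)"
proof -
  have "traj nxi n At Bt Ct G xi0 (\<sigma>(k := y)) k = traj nxi n At Bt Ct G xi0 \<sigma> k"
    by (rule traj_cong_prefix) simp
  then show ?thesis by (simp add: Let_def)
qed

lemma Eidx_traj_Suc_le:
  assumes n: "n \<ge> 1"
    and step: "\<And>\<xi>. (\<Sum>y<n. V (\<lambda>a. kmv nxi (At y) \<xi> a + kmv n (Bt y) (\<lambda>j. G j (kmv nxi Ct \<xi> 0)) a))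
                       / real n \<le> c * V \<xi>"
  shows "Eidx n (Suc k) (\<lambda>\<sigma>. V (traj nxi n At Bt Ct G xi0 \<sigma> (Suc k)))
         \<le> c * Eidx n k (\<lambda>\<sigma>. V (traj nxi n At Bt Ct G xi0 \<sigma> k))"
proof -
  have "Eidx n (Suc k) (\<lambda>\<sigma>. V (traj nxi n At Bt Ct G xi0 \<sigma> (Suc k)))
      = Eidx n k (\<lambda>\<sigma>. (\<Sum>y<n. V (traj nxi n At Bt Ct G xi0 (\<sigma>(k := y)) (Suc k))) / real n)"
    by (rule Eidx_Suc[OF n])
  also have "\<dots> \<le> Eidx n k (\<lambda>\<sigma>. c * V (traj nxi n At Bt Ct G xi0 \<sigma> k))"
    by (intro Eidx_mono[OF n]) (simp only: traj_Suc_fun_upd step)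
  also have "\<dots> = c * Eidx n k (\<lambda>\<sigma>. V (traj nxi n At Bt Ct G xi0 \<sigma> k))"
    by (rule Eidx_mult_left)
  finally show ?thesis .
qed

lemma Eidx_traj_le_power:
  assumes n: "n \<ge> 1" and c: "0 \<le> c"
    and step: "\<And>\<xi>. (\<Sum>y<n. V (\<lambda>a. kmv nxi (At y) \<xi> a + kmv n (Bt y) (\<lambda>j. G j (kmv nxi Ct \<xi> 0)) a))
                       / real n \<le> c * V \<xi>"
  shows "Eidx n k (\<lambda>\<sigma>. V (traj nxi n At Bt Ct G xi0 \<sigma> k)) \<le> c^k * V xi0"
proof (induction k)
  case 0
  then show ?case by (simp add: Eidx_0)
next
  case (Suc k)
  have "Eidx n (Suc k) (\<lambda>\<sigma>. V (traj nxi n At Bt Ct G xi0 \<sigma> (Suc k)))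
      \<le> c * Eidx n k (\<lambda>\<sigma>. V (traj nxi n At Bt Ct G xi0 \<sigma> k))"
    by (rule Eidx_traj_Suc_le[OF n step])
  also have "\<dots> \<le> c * (c^k * V xi0)"
    using Suc.IH c by (rule mult_left_mono)
  finally show ?case by simp
qed

lemma Eidx_traj_norm_le:
  assumes n: "n \<ge> 1" and c: "0 \<le> c"
    and step: "\<And>\<xi>. (\<Sum>y<n. V (\<lambda>a. kmv nxi (At y) \<xi> a + kmv n (Bt y) (\<lambda>j. G j (kmv nxi Ct \<xi> 0)) a))
                       / real n \<le> c * V \<xi>"
    and lmin: "0 < lmin" and lower: "\<And>\<xi>. lmin * N \<xi> \<le> V \<xi>" and upper: "\<And>\<xi>. V \<xi> \<le> lmax * N \<xi>"
  shows "Eidx n k (\<lambda>\<sigma>. N (traj nxi n At Bt Ct G xi0 \<sigma> k)) \<le> c^k * (lmax / lmin) * N xi0"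
proof -
  have "Eidx n k (\<lambda>\<sigma>. N (traj nxi n At Bt Ct G xi0 \<sigma> k))
      \<le> Eidx n k (\<lambda>\<sigma>. V (traj nxi n At Bt Ct G xi0 \<sigma> k) / lmin)"
    using lower lmin by (intro Eidx_mono[OF n]) (simp add: pos_le_divide_eq mult.commute)
  also have "\<dots> \<le> c^k * V xi0 / lmin"
    unfolding Eidx_divide using Eidx_traj_le_power[OF n c step] lmin by (simp add: divide_right_mono)
  also have "\<dots> \<le> c^k * (lmax * N xi0) / lmin"
    using upper c lmin by (intro divide_right_mono mult_left_mono) simp_all
  finally show ?thesis by simp
qed

theorem theorem1:
  fixes n nxi :: nat
    and f :: "nat \<Rightarrow> real^'p \<Rightarrow> real" and G :: "nat \<Rightarrow> real^'p \<Rightarrow> real^'p"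
    and xs :: "real^'p" and xis :: "nat \<Rightarrow> real^'p"
    and At Bt :: "nat \<Rightarrow> rmat" and Ct P :: rmat
    and L \<nu> \<gamma> \<rho> lam1 lam2 :: real
  assumes n_pos: "n \<ge> 1" and nxi_pos: "nxi \<ge> 1"
    and grad: "\<forall>i<n. \<forall>x. GDERIV (f i) x :> G i x"
    and grad_cont: "\<forall>i<n. continuous_on UNIV (G i)"
    and xs_stat: "GDERIV (\<lambda>x. (\<Sum>i<n. f i x) / real n) xs :> 0"
    and xs_unique: "\<forall>x. GDERIV (\<lambda>x. (\<Sum>i<n. f i x) / real n) x :> 0 \<longrightarrow> x = xs"
    and xis_fix: "\<forall>i<n. \<forall>a<nxi. xis a = kmv nxi (At i) xis a + kmv n (Bt i) (\<lambda>j. G j xs) a"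
    and xis_out: "kmv nxi Ct xis 0 = xs"
    and sector_avg: "\<forall>x. let u = x - xs; d = (\<Sum>j<n. G j x) /\<^sub>R real n - (\<Sum>j<n. G j xs) /\<^sub>R real n
                     in 2 * L * \<nu> * (u \<bullet> u) + 2 * (L - \<nu>) * (u \<bullet> d) + (-2) * (d \<bullet> d) \<ge> 0"
    and sector_i: "\<forall>x. \<forall>i<n. let u = x - xs; d = G i x - G i xs
                     in 2 * L * \<gamma> * (u \<bullet> u) + 2 * (L - \<gamma>) * (u \<bullet> d) + (-2) * (d \<bullet> d) \<ge> 0"
    and P_sym: "symm nxi P" and P_pd: "pdef nxi P"
    and lam1_nn: "lam1 \<ge> 0" and lam2_nn: "lam2 \<ge> 0"
    and LMI: "nsd (nxi + n)
      (\<lambda>r c. block4 nxi nxi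
          (\<lambda>a b. (\<Sum>i<n. mmul nxi (mmul nxi (tr (At i)) P) (At i) a b) / real n - \<rho>^2 * P a b)
          (\<lambda>a b. (\<Sum>i<n. mmul nxi (mmul nxi (tr (At i)) P) (Bt i) a b) / real n)
          (\<lambda>a b. (\<Sum>i<n. mmul nxi (mmul nxi (tr (Bt i)) P) (At i) a b) / real n)
          (\<lambda>a b. (\<Sum>i<n. mmul nxi (mmul nxi (tr (Bt i)) P) (Bt i) a b) / real n) r c
        + mmul (2 * n + 2)
            (mmul (2 * n + 2) (tr (hcat nxi (mmul 1 (Dpsi1 L \<nu> \<gamma>) Ct) (Dpsi2 n)))
               (kron 2 2 (block4 1 1 (\<lambda>_ _. lam1) zerom zerom (\<lambda>a b. lam2 / real n * idm n a b))
                         (\<lambda>a b. if a = b then 0 else 1)))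
            (hcat nxi (mmul 1 (Dpsi1 L \<nu> \<gamma>) Ct) (Dpsi2 n)) r c)"
  shows "(\<forall>k\<ge>1. \<forall>xi0.
            Eidx n (Suc k) (\<lambda>\<sigma>. kquad nxi P (\<lambda>a. traj nxi n At Bt Ct G xi0 \<sigma> (Suc k) a - xis a))
            \<le> \<rho>^2 * Eidx n k (\<lambda>\<sigma>. kquad nxi P (\<lambda>a. traj nxi n At Bt Ct G xi0 \<sigma> k a - xis a)))
       \<and> (\<forall>k\<ge>1. \<forall>xi0.
            Eidx n k (\<lambda>\<sigma>. bnorm2 nxi (\<lambda>a. traj nxi n At Bt Ct G xi0 \<sigma> k a - xis a))
            \<le> \<rho>^(2 * k) * cond nxi P * bnorm2 nxi (\<lambda>a. xi0 a - xis a))"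
proof -
  define V where "V = (\<lambda>\<xi>. kquad nxi P (\<lambda>a. \<xi> a - xis a))"
  define N where "N = (\<lambda>\<xi>. bnorm2 nxi (\<lambda>a. \<xi> a - xis a :: real^'p))"
  have step: "(\<Sum>y<n. V (\<lambda>a. kmv nxi (At y) \<xi> a + kmv n (Bt y) (\<lambda>j. G j (kmv nxi Ct \<xi> 0)) a)) / real n
      \<le> \<rho>^2 * V \<xi>" for \<xi>
    unfolding V_def
    by (rule expected_Lyapunov_step[OF xis_fix xis_out sector_avg sector_i lam1_nn lam2_nn LMI])
  obtain lmax lmin where cond: "cond nxi P = lmax / lmin" and "0 < lmin"
    and "\<And>x. quad nxi P x \<le> lmax * sqnorm nxi x" "\<And>x. lmin * sqnorm nxi x \<le> quad nxi P x"
    using cond_Rayleigh_bounds[OF nxi_pos P_sym P_pd] by blast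
  then have "lmin * N \<xi> \<le> V \<xi>" "V \<xi> \<le> lmax * N \<xi>" for \<xi>
    unfolding V_def N_def by (simp_all add: kquad_le_bnorm2 bnorm2_le_kquad)
  then have "Eidx n k (\<lambda>\<sigma>. N (traj nxi n At Bt Ct G xi0 \<sigma> k)) \<le> (\<rho>^2)^k * (lmax / lmin) * N xi0" for k xi0
    by (rule Eidx_traj_norm_le[OF n_pos zero_le_power2 step \<open>0 < lmin\<close>])
  moreover have "Eidx n (Suc k) (\<lambda>\<sigma>. V (traj nxi n At Bt Ct G xi0 \<sigma> (Suc k)))
      \<le> \<rho>^2 * Eidx n k (\<lambda>\<sigma>. V (traj nxi n At Bt Ct G xi0 \<sigma> k))" for k xi0
    by (rule Eidx_traj_Suc_le[OF n_pos step])
  ultimately show ?thesis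
    unfolding V_def N_def cond power_mult by blast
qed

end
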